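(* Let $M\in\mathbb{R}^{(\ell+1)\times(\ell+1)}$ have all entries nonnegative, $\lambda\in\mathbb{R}$, and $x\in\mathbb{R}^{\ell+1}$ with all entries strictly positive, such that $Mx=\lambda x$. Let $\overline{L}:=\lambda I_\ell-\overline{M}$. (i) Then $\lambda\ge0$ and $\overline{M}\,\overline{x}\le\lambda\overline{x}$ entrywise; consequently $\overline{L}\,\overline{x}\ge0$. (ii) If moreover the last column of $M$ has all entries strictly positive, then $\overline{M}\,\overline{x}<\lambda\overline{x}$ entrywise, and consequently $\overline{L}$ is a nonsingular $M$-matrix. (iii) Let $t$ be a positive integer and $\overline{y}:=\sum_{k=0}^{t-1}\overline{M}^k\overline{x}$. Then $\overline{y}$ has all entries strictly positive. If moreover the last column of $\sum_{k=0}^{t-1}M^k$ has all entries strictly positive, then $\overline{M}\,\overline{y}<\lambda\overline{y}$ entrywise, and consequently $\overline{L}$ is a nonsingular $M$-matrix.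
   Context: For $x\in\mathbb{R}^{\ell+1}$, $\overline{x}\in\mathbb{R}^\ell$ denotes $x$ with its last coordinate removed; for $M\in\mathbb{R}^{(\ell+1)\times(\ell+1)}$, $\overline{M}\in\mathbb{R}^{\ell\times\ell}$ denotes $M$ with its last row and last column removed. Inequalities $u\le v$ (resp. $u<v$) between vectors are entrywise. A matrix $Q\in\mathbb{R}^{\ell\times\ell}$ with nonpositive off-diagonal entries is a nonsingular $M$-matrix if it is invertible and $Q^{-1}$ has all entries nonnegative. *)

theory Defs
  imports "Jordan_Normal_Form.Matrix"
begin

text \<open>Remove the last row and last column of a matrix (the paper's overline on matrices).\<close>
definition trunc_mat :: "real mat \<Rightarrow> real mat" where
  "trunc_mat M = mat (dim_row M - 1) (dim_col M - 1) (\<lambda>(i,j). M $$ (i,j))"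

text \<open>Remove the last coordinate of a vector (the paper's overline on vectors).\<close>
definition trunc_vec :: "real vec \<Rightarrow> real vec" where
  "trunc_vec x = vec (dim_vec x - 1) (\<lambda>i. x $ i)"

definition nonsingular_M_matrix :: "nat \<Rightarrow> real mat \<Rightarrow> bool" where
  "nonsingular_M_matrix n Q \<longleftrightarrow>
     Q \<in> carrier_mat n n \<and>
     (\<forall>i<n. \<forall>j<n. i \<noteq> j \<longrightarrow> Q $$ (i,j) \<le> 0) \<and>
     (\<exists>B. B \<in> carrier_mat n n \<and> inverts_mat Q B \<and> inverts_mat B Q \<and>
          (\<forall>i<n. \<forall>j<n. 0 \<le> B $$ (i,j)))"

end

theory Submission
  imports Defs "Jordan_Normal_Form.Determinant"
begin

text \<open>Deleting the last index turns \<open>M x = \<lambda> x\<close> into \<open>M' x' = \<lambda> x' - x\<^sub>\<ell> c\<close>, where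
  \<open>c\<close> is the truncated last column of \<open>M\<close>.  Since \<open>x\<^sub>\<ell> > 0\<close> and \<open>c \<ge> 0\<close>, the positive vector
  \<open>x'\<close> is subinvariant for \<open>M'\<close>, strictly so when \<open>c > 0\<close>.  Iterating gives
  \<open>\<lambda> y - M' y = x\<^sub>\<ell> (\<Sum>k<t. M'\<^sup>k c)\<close> for \<open>y = (\<Sum>k<t. M'\<^sup>k x')\<close>, and the \<open>i\<close>-th entry of
  \<open>\<Sum>k<t. M'\<^sup>k c\<close> is positive as soon as a walk of length \<open>< t\<close> in the graph of \<open>M\<close> leads
  from \<open>i\<close> to the last index, i.e. as soon as \<open>(\<Sum>k<t. M\<^sup>k)\<^sub>i\<^sub>\<ell> > 0\<close>.
  Finally, a Z-matrix \<open>Q\<close> with \<open>Q y > 0\<close> for some \<open>y > 0\<close> satisfies the comparison principle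
  \<open>Q z \<ge> 0 \<Longrightarrow> z \<ge> 0\<close> (look at the minimum of \<open>z\<^sub>j / y\<^sub>j\<close>); this makes \<open>Q\<close> injective, and
  applied to the columns of \<open>Q\<^sup>-\<^sup>1\<close> it shows \<open>Q\<^sup>-\<^sup>1 \<ge> 0\<close>.\<close>

lemma mult_mat_vec_index_sum:
  assumes "A \<in> carrier_mat n m" "v \<in> carrier_vec m" "i < n"
  shows "(A *\<^sub>v v) $ i = (\<Sum>j<m. A $$ (i,j) * v $ j)"
  using assms by (simp add: scalar_prod_def atLeast0LessThan)

lemma mult_mat_vec_index_sum_vec:
  assumes A: "A \<in> carrier_mat n m" and v: "\<And>k. v k \<in> carrier_vec m" and i: "i < n"
  shows "(A *\<^sub>v vec m (\<lambda>j. \<Sum>k\<in>K. v k $ j)) $ i = (\<Sum>k\<in>K. (A *\<^sub>v v k) $ i)"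
proof -
  have "(A *\<^sub>v vec m (\<lambda>j. \<Sum>k\<in>K. v k $ j)) $ i = (\<Sum>j<m. \<Sum>k\<in>K. A $$ (i,j) * v k $ j)"
    using mult_mat_vec_index_sum[OF A _ i, of "vec m (\<lambda>j. \<Sum>k\<in>K. v k $ j)"]
    by (simp add: sum_distrib_left)
  also have "\<dots> = (\<Sum>k\<in>K. (A *\<^sub>v v k) $ i)"
    using mult_mat_vec_index_sum[OF A v i] by (simp add: sum.swap[of _ "{..<m}"])
  finally show ?thesis .
qed

lemma pow_mat_Suc_left:
  assumes "A \<in> carrier_mat n n"
  shows "A ^\<^sub>m Suc k = A * A ^\<^sub>m k"
proof (induction k)
  case 0
  then show ?case using assms by simp
next
  case (Suc k)
  have "A ^\<^sub>m Suc (Suc k) = (A * A ^\<^sub>m k) * A" using Suc by simp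
  also have "\<dots> = A * (A ^\<^sub>m k * A)" using assms by (simp add: assoc_mult_mat[of _ n n _ n _ n])
  finally show ?case by simp
qed

lemma pow_mat_Suc_mult_mat_vec:
  assumes "A \<in> carrier_mat n n" "v \<in> carrier_vec n"
  shows "A ^\<^sub>m Suc k *\<^sub>v v = A ^\<^sub>m k *\<^sub>v (A *\<^sub>v v)"
    and "A ^\<^sub>m Suc k *\<^sub>v v = A *\<^sub>v (A ^\<^sub>m k *\<^sub>v v)"
  using assms by (simp add: assoc_mult_mat_vec[of _ n n _ n],
                  simp add: pow_mat_Suc_left[OF assms(1)] assoc_mult_mat_vec[of _ n n _ n]
                      del: pow_mat.simps)

lemma mult_mat_vec_nonneg:
  fixes A :: "real mat"
  assumes "A \<in> carrier_mat n m" "v \<in> carrier_vec m"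
    and "\<forall>i<n. \<forall>j<m. 0 \<le> A $$ (i,j)" "\<forall>j<m. 0 \<le> v $ j" "i < n"
  shows "0 \<le> (A *\<^sub>v v) $ i"
  using assms by (subst mult_mat_vec_index_sum) (auto intro!: sum_nonneg)

lemma pow_mat_nonneg:
  fixes A :: "real mat"
  assumes A: "A \<in> carrier_mat n n" and nonneg: "\<forall>i<n. \<forall>j<n. 0 \<le> A $$ (i,j)"
  shows "\<forall>i<n. \<forall>j<n. 0 \<le> (A ^\<^sub>m k) $$ (i,j)"
proof (induction k)
  case 0
  then show ?case using A by simp
next
  case (Suc k)
  then show ?case
    using A nonneg by (auto simp: scalar_prod_def intro!: sum_nonneg)
qed

lemma pow_mult_mat_vec_nonneg:
  fixes A :: "real mat"
  assumes "A \<in> carrier_mat n n" "v \<in> carrier_vec n"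
    and "\<forall>i<n. \<forall>j<n. 0 \<le> A $$ (i,j)" "\<forall>j<n. 0 \<le> v $ j" "i < n"
  shows "0 \<le> (A ^\<^sub>m k *\<^sub>v v) $ i"
  using assms by (intro mult_mat_vec_nonneg[of _ n n] pow_mat_nonneg) auto

lemma mult_mat_vec_pos:
  fixes A :: "real mat"
  assumes A: "A \<in> carrier_mat n m" and v: "v \<in> carrier_vec m"
    and "\<forall>i<n. \<forall>j<m. 0 \<le> A $$ (i,j)" "\<forall>j<m. 0 \<le> v $ j"
    and i: "i < n" and "j < m" "0 < A $$ (i,j)" "0 < v $ j"
  shows "0 < (A *\<^sub>v v) $ i"
proof -
  have "0 < (\<Sum>p<m. A $$ (i,p) * v $ p)"
    by (rule sum_pos2[of _ j]) (use assms in auto)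
  then show ?thesis by (simp only: mult_mat_vec_index_sum[OF A v i])
qed

lemma pow_mat_Suc_index_pos_obtain:
  fixes M :: "real mat"
  assumes M: "M \<in> carrier_mat n n" and nonneg: "\<forall>i<n. \<forall>j<n. 0 \<le> M $$ (i,j)"
    and i: "i < n" and j: "j < n" and pos: "0 < (M ^\<^sub>m Suc k) $$ (i,j)"
  obtains p where "p < n" "0 < M $$ (i,p)" "0 < (M ^\<^sub>m k) $$ (p,j)"
proof -
  have "(M ^\<^sub>m Suc k) $$ (i,j) = (\<Sum>p<n. M $$ (i,p) * (M ^\<^sub>m k) $$ (p,j))"
    using M i j by (simp add: pow_mat_Suc_left[OF M] scalar_prod_def atLeast0LessThan del: pow_mat.simps)
  then have "(\<Sum>p<n. M $$ (i,p) * (M ^\<^sub>m k) $$ (p,j)) \<noteq> 0" using pos by simp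
  then obtain p where p: "p < n" "M $$ (i,p) * (M ^\<^sub>m k) $$ (p,j) \<noteq> 0"
    by (rule sum.not_neutral_contains_not_neutral) simp
  moreover have "0 \<le> M $$ (i,p)" "0 \<le> (M ^\<^sub>m k) $$ (p,j)"
    using p(1) i j nonneg pow_mat_nonneg[OF M nonneg] by auto
  ultimately show thesis using that by (simp add: order_le_neq_trans)
qed

subsection \<open>Z-matrices and nonsingular M-matrices\<close>

definition Z_matrix :: "nat \<Rightarrow> real mat \<Rightarrow> bool" where
  "Z_matrix n Q \<longleftrightarrow> Q \<in> carrier_mat n n \<and> (\<forall>i<n. \<forall>j<n. i \<noteq> j \<longrightarrow> Q $$ (i,j) \<le> 0)"

lemma Z_matrix_comparison:
  assumes Z: "Z_matrix n Q"
    and y: "y \<in> carrier_vec n" "\<forall>i<n. 0 < y $ i" "\<forall>i<n. 0 < (Q *\<^sub>v y) $ i"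
    and z: "z \<in> carrier_vec n" "\<forall>i<n. 0 \<le> (Q *\<^sub>v z) $ i"
  shows "\<forall>i<n. 0 \<le> z $ i"
proof (rule ccontr)
  assume "\<not> ?thesis"
  then obtain i1 where i1: "i1 < n" "z $ i1 < 0" by auto
  have Q: "Q \<in> carrier_mat n n" using Z by (simp add: Z_matrix_def)
  define r where "r = Min ((\<lambda>j. z $ j / y $ j) ` {..<n})"
  have "r \<in> (\<lambda>j. z $ j / y $ j) ` {..<n}"
    unfolding r_def using i1 by (intro Min_in) auto
  then obtain i0 where i0: "i0 < n" "r = z $ i0 / y $ i0" by auto
  have r_le: "r * y $ j \<le> z $ j" if "j < n" for j
  proof -
    have "r \<le> z $ j / y $ j" unfolding r_def using that by (intro Min_le) auto
    then show ?thesis using that y(2) by (simp add: pos_le_divide_eq)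
  qed
  have "r * y $ i1 < 0" using r_le[OF i1(1)] i1(2) by linarith
  then have "r < 0" using i1(1) y(2) by (auto simp: mult_less_0_iff)
  \<comment> \<open>\<open>z - r y\<close> is nonnegative and vanishes at \<open>i0\<close>, so row \<open>i0\<close> of \<open>Q\<close> maps it to a
     nonpositive number, whereas \<open>Q (z - r y)\<close> is positive there.\<close>
  have "(\<Sum>j<n. Q $$ (i0,j) * (z $ j - r * y $ j)) = (Q *\<^sub>v z) $ i0 - r * (Q *\<^sub>v y) $ i0"
    unfolding mult_mat_vec_index_sum[OF Q z(1) i0(1)] mult_mat_vec_index_sum[OF Q y(1) i0(1)]
    by (simp add: algebra_simps sum_subtractf sum_distrib_left)
  also have "\<dots> > 0"
  proof -
    have "r * (Q *\<^sub>v y) $ i0 < 0" using \<open>r < 0\<close> y(3) i0(1) by (simp add: mult_neg_pos)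
    then show ?thesis using z(2) i0(1) by (simp add: less_le_trans)
  qed
  finally have pos: "0 < (\<Sum>j<n. Q $$ (i0,j) * (z $ j - r * y $ j))" .
  have "Q $$ (i0,j) * (z $ j - r * y $ j) \<le> 0" if "j < n" for j
  proof (cases "j = i0")
    case True
    have "0 < y $ i0" using i0(1) y(2) by simp
    then show ?thesis using True i0(2) by simp
  next
    case False
    then show ?thesis
      using Z i0 that r_le[OF that] by (simp add: Z_matrix_def mult_nonpos_nonneg)
  qed
  then have "(\<Sum>j<n. Q $$ (i0,j) * (z $ j - r * y $ j)) \<le> 0" by (intro sum_nonpos) simp
  then show False using pos by simp
qed

lemma square_mat_invertible_if_injective:
  assumes Q: "(Q :: real mat) \<in> carrier_mat n n"
    and inj: "\<And>v. v \<in> carrier_vec n \<Longrightarrow> Q *\<^sub>v v = 0\<^sub>v n \<Longrightarrow> v = 0\<^sub>v n"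
  shows "\<exists>B. B \<in> carrier_mat n n \<and> Q * B = 1\<^sub>m n \<and> B * Q = 1\<^sub>m n"
proof -
  have "det Q \<noteq> 0" using det_0_iff_vec_prod_zero_field[OF Q] inj by blast
  then have "Q \<in> Units (ring_mat TYPE(real) n ())" by (rule det_non_zero_imp_unit[OF Q])
  then show ?thesis unfolding Units_def by (auto simp: ring_mat_simps)
qed

lemma nonsingular_M_matrix_if_positive_image:
  assumes Z: "Z_matrix n Q"
    and y: "y \<in> carrier_vec n" "\<forall>i<n. 0 < y $ i" "\<forall>i<n. 0 < (Q *\<^sub>v y) $ i"
  shows "nonsingular_M_matrix n Q"
proof -
  have Q: "Q \<in> carrier_mat n n" using Z by (simp add: Z_matrix_def)
  note comparison = Z_matrix_comparison[OF Z y]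
  have "v = 0\<^sub>v n" if v: "v \<in> carrier_vec n" "Q *\<^sub>v v = 0\<^sub>v n" for v
  proof -
    have "Q *\<^sub>v ((-1) \<cdot>\<^sub>v v) = 0\<^sub>v n"
      using Q v by (simp add: mult_mat_vec[OF Q v(1)]) (intro eq_vecI; simp)
    then have "\<forall>i<n. 0 \<le> v $ i" "\<forall>i<n. 0 \<le> ((-1) \<cdot>\<^sub>v v) $ i"
      using comparison[of v] comparison[of "(-1) \<cdot>\<^sub>v v"] v by auto
    then show ?thesis using v by (intro eq_vecI) (auto intro: order.antisym)
  qed
  then obtain B where B: "B \<in> carrier_mat n n" "Q * B = 1\<^sub>m n" "B * Q = 1\<^sub>m n"
    using square_mat_invertible_if_injective[OF Q] by blast
  have "0 \<le> B $$ (i,j)" if ij: "i < n" "j < n" for i j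
  proof -
    have "Q *\<^sub>v col B j = unit_vec n j"
      using col_mult2[OF Q B(1) ij(2)] B(2) ij by (simp del: col_mult2)
    then have "\<forall>i<n. 0 \<le> col B j $ i" using comparison[of "col B j"] B ij by auto
    then show ?thesis using B ij by simp
  qed
  then show ?thesis
    using Z B unfolding nonsingular_M_matrix_def Z_matrix_def inverts_mat_def by auto
qed

lemma shifted_mult_mat_vec_index:
  fixes A :: "real mat"
  assumes "A \<in> carrier_mat n n" "v \<in> carrier_vec n" "i < n"
  shows "((lam \<cdot>\<^sub>m 1\<^sub>m n - A) *\<^sub>v v) $ i = lam * v $ i - (A *\<^sub>v v) $ i"
proof -
  have "(lam \<cdot>\<^sub>m 1\<^sub>m n - A) *\<^sub>v v = lam \<cdot>\<^sub>m 1\<^sub>m n *\<^sub>v v - A *\<^sub>v v"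
    by (rule minus_mult_distrib_mat_vec) (use assms in auto)
  moreover have "(lam \<cdot>\<^sub>m 1\<^sub>m n *\<^sub>v v) $ i = lam * v $ i"
    using assms by (simp add: scalar_prod_def sum.delta if_distrib if_distribR cong: if_cong)
  ultimately show ?thesis using assms by simp
qed

lemma nonsingular_M_matrix_shift_if_strictly_subinvariant:
  assumes A: "A \<in> carrier_mat n n" and nonneg: "\<forall>i<n. \<forall>j<n. 0 \<le> A $$ (i,j)"
    and y: "y \<in> carrier_vec n" "\<forall>i<n. 0 < y $ i"
    and sub: "\<forall>i<n. (A *\<^sub>v y) $ i < lam * y $ i"
  shows "nonsingular_M_matrix n (lam \<cdot>\<^sub>m 1\<^sub>m n - A)"
proof (rule nonsingular_M_matrix_if_positive_image[OF _ y])
  show "Z_matrix n (lam \<cdot>\<^sub>m 1\<^sub>m n - A)"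
    using A nonneg by (simp add: Z_matrix_def minus_carrier_mat)
  show "\<forall>i<n. 0 < ((lam \<cdot>\<^sub>m 1\<^sub>m n - A) *\<^sub>v y) $ i"
    using sub by (simp add: shifted_mult_mat_vec_index[OF A y(1)])
qed

subsection \<open>Deleting the last row and column\<close>

lemma trunc_mat_carrier: "M \<in> carrier_mat (n+1) (n+1) \<Longrightarrow> trunc_mat M \<in> carrier_mat n n"
  by (simp add: trunc_mat_def)

lemma trunc_mat_index:
  "M \<in> carrier_mat (n+1) (n+1) \<Longrightarrow> i < n \<Longrightarrow> j < n \<Longrightarrow> trunc_mat M $$ (i,j) = M $$ (i,j)"
  by (simp add: trunc_mat_def)

lemma trunc_vec_carrier: "v \<in> carrier_vec (n+1) \<Longrightarrow> trunc_vec v \<in> carrier_vec n"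
  by (simp add: trunc_vec_def)

lemma trunc_vec_index: "v \<in> carrier_vec (n+1) \<Longrightarrow> i < n \<Longrightarrow> trunc_vec v $ i = v $ i"
  by (simp add: trunc_vec_def)

lemma trunc_col_carrier: "M \<in> carrier_mat (n+1) (n+1) \<Longrightarrow> trunc_vec (col M n) \<in> carrier_vec n"
  by (simp add: trunc_vec_def)

lemma trunc_col_index:
  "M \<in> carrier_mat (n+1) (n+1) \<Longrightarrow> i < n \<Longrightarrow> trunc_vec (col M n) $ i = M $$ (i,n)"
  by (simp add: trunc_vec_def)

lemma trunc_mat_nonneg:
  "M \<in> carrier_mat (n+1) (n+1) \<Longrightarrow> \<forall>i<n+1. \<forall>j<n+1. 0 \<le> M $$ (i,j)
    \<Longrightarrow> \<forall>i<n. \<forall>j<n. 0 \<le> trunc_mat M $$ (i,j)"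
  by (simp add: trunc_mat_index)

lemma trunc_col_nonneg:
  "M \<in> carrier_mat (n+1) (n+1) \<Longrightarrow> \<forall>i<n+1. \<forall>j<n+1. 0 \<le> M $$ (i,j)
    \<Longrightarrow> \<forall>i<n. 0 \<le> trunc_vec (col M n) $ i"
  by (simp add: trunc_col_index)

lemma trunc_mult_mat_vec:
  assumes M: "M \<in> carrier_mat (n+1) (n+1)" and v: "v \<in> carrier_vec (n+1)"
  shows "trunc_mat M *\<^sub>v trunc_vec v = trunc_vec (M *\<^sub>v v) - v $ n \<cdot>\<^sub>v trunc_vec (col M n)"
proof (rule eq_vecI)
  fix i assume "i < dim_vec (trunc_vec (M *\<^sub>v v) - v $ n \<cdot>\<^sub>v trunc_vec (col M n))"
  then have i: "i < n" using M by (simp add: trunc_vec_def)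
  have "(trunc_mat M *\<^sub>v trunc_vec v) $ i = (\<Sum>j<n. M $$ (i,j) * v $ j)"
    using M v i
    by (simp add: mult_mat_vec_index_sum[OF trunc_mat_carrier[OF M] trunc_vec_carrier[OF v] i]
                  trunc_mat_index trunc_vec_index)
  also have "\<dots> = (M *\<^sub>v v) $ i - M $$ (i,n) * v $ n"
    using mult_mat_vec_index_sum[OF M v, of i] i by simp
  finally show "(trunc_mat M *\<^sub>v trunc_vec v) $ i
      = (trunc_vec (M *\<^sub>v v) - v $ n \<cdot>\<^sub>v trunc_vec (col M n)) $ i"
    using M v i by (simp add: trunc_vec_def)
qed (use M v in \<open>simp add: trunc_vec_def trunc_mat_def\<close>)

lemma pow_mat_last_col_pos_imp_trunc_pos:
  fixes M :: "real mat"
  assumes M: "M \<in> carrier_mat (n+1) (n+1)" and nonneg: "\<forall>i<n+1. \<forall>j<n+1. 0 \<le> M $$ (i,j)"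
    and "i < n" "0 < (M ^\<^sub>m k) $$ (i,n)"
  shows "\<exists>m<k. 0 < (trunc_mat M ^\<^sub>m m *\<^sub>v trunc_vec (col M n)) $ i"
  using assms(3,4)
proof (induction k arbitrary: i)
  case 0
  then show ?case using M by simp
next
  case (Suc k)
  let ?M' = "trunc_mat M" and ?c = "trunc_vec (col M n)"
  have M': "?M' \<in> carrier_mat n n" and c: "?c \<in> carrier_vec n"
    using M by (rule trunc_mat_carrier, rule trunc_col_carrier)
  have M'_nonneg: "\<forall>i<n. \<forall>j<n. 0 \<le> ?M' $$ (i,j)" and c_nonneg: "\<forall>i<n. 0 \<le> ?c $ i"
    using M nonneg by (rule trunc_mat_nonneg, rule trunc_col_nonneg)
  obtain j where j: "j < n+1" "0 < M $$ (i,j)" "0 < (M ^\<^sub>m k) $$ (j,n)"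
    using pow_mat_Suc_index_pos_obtain[OF M nonneg _ _ Suc.prems(2)] Suc.prems(1) by auto
  show ?case
  proof (cases "j = n")
    case True
    then have "0 < (?M' ^\<^sub>m 0 *\<^sub>v ?c) $ i"
      using j(2) M M' c Suc.prems(1) by (simp add: trunc_col_index)
    then show ?thesis by blast
  next
    case False
    then obtain m where m: "m < k" "0 < (?M' ^\<^sub>m m *\<^sub>v ?c) $ j"
      using Suc.IH[of j] j by auto
    \<comment> \<open>prefix the walk from \<open>j\<close> by the edge \<open>i \<rightarrow> j\<close>\<close>
    have "0 < (?M' *\<^sub>v (?M' ^\<^sub>m m *\<^sub>v ?c)) $ i"
    proof (rule mult_mat_vec_pos[OF M' _ M'_nonneg _ Suc.prems(1) _ _ m(2)])
      show "?M' ^\<^sub>m m *\<^sub>v ?c \<in> carrier_vec n" by (rule mult_mat_vec_carrier[OF pow_carrier_mat[OF M'] c])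
      show "\<forall>p<n. 0 \<le> (?M' ^\<^sub>m m *\<^sub>v ?c) $ p"
        using pow_mult_mat_vec_nonneg[OF M' c M'_nonneg c_nonneg] by blast
      show "j < n" using False j(1) by simp
      show "0 < ?M' $$ (i,j)" using j(2) M False j(1) Suc.prems(1) by (simp add: trunc_mat_index)
    qed
    then show ?thesis
      using m(1) pow_mat_Suc_mult_mat_vec(2)[OF M' c] by (intro exI[of _ "Suc m"]) simp
  qed
qed

subsection \<open>A nonnegative matrix with a positive eigenvector\<close>

locale nonneg_mat_pos_eigenvector =
  fixes n :: nat and M :: "real mat" and lam :: real and x :: "real vec"
  assumes M_carrier: "M \<in> carrier_mat (n+1) (n+1)"
    and M_nonneg: "\<forall>i<n+1. \<forall>j<n+1. 0 \<le> M $$ (i,j)"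
    and x_carrier: "x \<in> carrier_vec (n+1)"
    and x_pos: "\<forall>i<n+1. 0 < x $ i"
    and eigen: "M *\<^sub>v x = lam \<cdot>\<^sub>v x"
begin

abbreviation M' :: "real mat" where "M' \<equiv> trunc_mat M"
abbreviation x' :: "real vec" where "x' \<equiv> trunc_vec x"
abbreviation c :: "real vec" where "c \<equiv> trunc_vec (col M n)"

definition partial_sum :: "nat \<Rightarrow> real vec" where
  "partial_sum t = vec n (\<lambda>i. \<Sum>k<t. (M' ^\<^sub>m k *\<^sub>v x') $ i)"

lemma M'_carrier: "M' \<in> carrier_mat n n"
  using M_carrier by (rule trunc_mat_carrier)

lemma x'_carrier: "x' \<in> carrier_vec n"
  using x_carrier by (rule trunc_vec_carrier)

lemma c_carrier: "c \<in> carrier_vec n"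
  using M_carrier by (rule trunc_col_carrier)

lemma M'_nonneg: "\<forall>i<n. \<forall>j<n. 0 \<le> M' $$ (i,j)"
  using M_carrier M_nonneg by (rule trunc_mat_nonneg)

lemma x'_pos: "\<forall>i<n. 0 < x' $ i"
  using x_carrier x_pos by (simp add: trunc_vec_index)

lemma c_nonneg: "\<forall>i<n. 0 \<le> c $ i"
  using M_carrier M_nonneg by (rule trunc_col_nonneg)

lemma eigenvalue_nonneg: "0 \<le> lam"
proof -
  have "0 \<le> (M *\<^sub>v x) $ 0"
    using mult_mat_vec_nonneg[OF M_carrier x_carrier M_nonneg] x_pos by (simp add: less_imp_le)
  then have "0 \<le> lam * x $ 0" using eigen x_carrier by simp
  moreover have "0 < x $ 0" using x_pos by simp
  ultimately show ?thesis by (simp add: zero_le_mult_iff)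
qed

lemma trunc_eigen: "M' *\<^sub>v x' = lam \<cdot>\<^sub>v x' - x $ n \<cdot>\<^sub>v c"
proof -
  have "trunc_vec (M *\<^sub>v x) = lam \<cdot>\<^sub>v x'"
    unfolding eigen using x_carrier by (intro eq_vecI) (simp_all add: trunc_vec_def)
  then show ?thesis using trunc_mult_mat_vec[OF M_carrier x_carrier] by simp
qed

lemma trunc_eigen_index: "i < n \<Longrightarrow> (M' *\<^sub>v x') $ i = lam * x' $ i - x $ n * c $ i"
  using x'_carrier c_carrier by (simp add: trunc_eigen)

lemma x'_subinvariant: "i < n \<Longrightarrow> (M' *\<^sub>v x') $ i \<le> lam * x' $ i"
  using trunc_eigen_index c_nonneg x_pos by (simp add: less_imp_le)

lemma x'_strictly_subinvariant: "i < n \<Longrightarrow> 0 < M $$ (i,n) \<Longrightarrow> (M' *\<^sub>v x') $ i < lam * x' $ i"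
  using trunc_eigen_index x_pos M_carrier by (simp add: trunc_col_index)

lemma pow_trunc_eigen:
  "M' ^\<^sub>m Suc k *\<^sub>v x' = lam \<cdot>\<^sub>v (M' ^\<^sub>m k *\<^sub>v x') - x $ n \<cdot>\<^sub>v (M' ^\<^sub>m k *\<^sub>v c)"
proof -
  have P: "M' ^\<^sub>m k \<in> carrier_mat n n" using M'_carrier by simp
  have "M' ^\<^sub>m Suc k *\<^sub>v x' = M' ^\<^sub>m k *\<^sub>v (lam \<cdot>\<^sub>v x' - x $ n \<cdot>\<^sub>v c)"
    by (simp only: pow_mat_Suc_mult_mat_vec(1)[OF M'_carrier x'_carrier] trunc_eigen)
  also have "\<dots> = lam \<cdot>\<^sub>v (M' ^\<^sub>m k *\<^sub>v x') - x $ n \<cdot>\<^sub>v (M' ^\<^sub>m k *\<^sub>v c)"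
    using x'_carrier c_carrier
    by (simp add: mult_minus_distrib_mat_vec[OF P] mult_mat_vec[OF P])
  finally show ?thesis .
qed

lemma partial_sum_defect:
  assumes i: "i < n"
  shows "lam * partial_sum t $ i - (M' *\<^sub>v partial_sum t) $ i = x $ n * (\<Sum>k<t. (M' ^\<^sub>m k *\<^sub>v c) $ i)"
proof -
  have "(M' *\<^sub>v partial_sum t) $ i = (\<Sum>k<t. (M' *\<^sub>v (M' ^\<^sub>m k *\<^sub>v x')) $ i)"
    unfolding partial_sum_def
    using M'_carrier mult_mat_vec_carrier[OF pow_carrier_mat[OF M'_carrier] x'_carrier] i
    by (intro mult_mat_vec_index_sum_vec) auto
  also have "\<dots> = (\<Sum>k<t. lam * (M' ^\<^sub>m k *\<^sub>v x') $ i - x $ n * (M' ^\<^sub>m k *\<^sub>v c) $ i)"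
    using M'_carrier x'_carrier c_carrier i
    by (simp add: pow_mat_Suc_mult_mat_vec(2)[OF M'_carrier x'_carrier, symmetric] pow_trunc_eigen
             del: pow_mat.simps)
  finally show ?thesis
    using i by (simp add: partial_sum_def sum_subtractf sum_distrib_left)
qed

lemma partial_sum_carrier: "partial_sum t \<in> carrier_vec n"
  by (simp add: partial_sum_def)

lemma partial_sum_pos:
  assumes "0 < t" "i < n"
  shows "0 < partial_sum t $ i"
proof -
  have "0 < (\<Sum>k<t. (M' ^\<^sub>m k *\<^sub>v x') $ i)"
  proof (rule sum_pos2)
    show "0 < (M' ^\<^sub>m 0 *\<^sub>v x') $ i" using assms(2) x'_pos M'_carrier x'_carrier by simp
    show "0 \<le> (M' ^\<^sub>m k *\<^sub>v x') $ i" for k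
      using pow_mult_mat_vec_nonneg[OF M'_carrier x'_carrier M'_nonneg _ assms(2)] x'_pos
      by (simp add: less_imp_le)
  qed (use assms(1) in auto)
  then show ?thesis using assms(2) by (simp add: partial_sum_def)
qed

lemma partial_sum_strictly_subinvariant:
  assumes "\<forall>i<n. 0 < (\<Sum>k<t. (M ^\<^sub>m k) $$ (i,n))" "i < n"
  shows "(M' *\<^sub>v partial_sum t) $ i < lam * partial_sum t $ i"
proof -
  have "(\<Sum>k<t. (M ^\<^sub>m k) $$ (i,n)) \<noteq> 0" using assms by auto
  then obtain k where k: "k < t" "(M ^\<^sub>m k) $$ (i,n) \<noteq> 0"
    by (rule sum.not_neutral_contains_not_neutral) simp
  then have "0 < (M ^\<^sub>m k) $$ (i,n)"
    using pow_mat_nonneg[OF M_carrier M_nonneg] assms(2) by (simp add: order_le_neq_trans)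
  then obtain m where m: "m < k" "0 < (M' ^\<^sub>m m *\<^sub>v c) $ i"
    using pow_mat_last_col_pos_imp_trunc_pos[OF M_carrier M_nonneg assms(2)] by blast
  have "0 < (\<Sum>k<t. (M' ^\<^sub>m k *\<^sub>v c) $ i)"
  proof (rule sum_pos2)
    show "0 \<le> (M' ^\<^sub>m k *\<^sub>v c) $ i" for k
      using pow_mult_mat_vec_nonneg[OF M'_carrier c_carrier M'_nonneg c_nonneg assms(2)] .
  qed (use m k in auto)
  moreover have "0 < x $ n" using x_pos by simp
  ultimately have "0 < x $ n * (\<Sum>k<t. (M' ^\<^sub>m k *\<^sub>v c) $ i)" by simp
  then show ?thesis using partial_sum_defect[OF assms(2), of t] by linarith
qed

end

theorem proposition6p7:
  fixes l :: nat and M :: "real mat" and lam :: real and x :: "real vec"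
  assumes M_carrier: "M \<in> carrier_mat (l+1) (l+1)"
    and M_nonneg: "\<forall>i<l+1. \<forall>j<l+1. 0 \<le> M $$ (i,j)"
    and x_carrier: "x \<in> carrier_vec (l+1)"
    and x_pos: "\<forall>i<l+1. 0 < x $ i"
    and eig: "M *\<^sub>v x = lam \<cdot>\<^sub>v x"
  defines "Lb \<equiv> lam \<cdot>\<^sub>m 1\<^sub>m l - trunc_mat M"
  shows
    \<comment> \<open>(i)\<close>
    "(0 \<le> lam \<and>
      (\<forall>i<l. (trunc_mat M *\<^sub>v trunc_vec x) $ i \<le> lam * trunc_vec x $ i) \<and>
      (\<forall>i<l. 0 \<le> (Lb *\<^sub>v trunc_vec x) $ i))
     \<and>
     \<comment> \<open>(ii)\<close>
     ((\<forall>i<l+1. 0 < M $$ (i,l)) \<longrightarrow>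
        (\<forall>i<l. (trunc_mat M *\<^sub>v trunc_vec x) $ i < lam * trunc_vec x $ i) \<and>
        nonsingular_M_matrix l Lb)
     \<and>
     \<comment> \<open>(iii)\<close>
     (\<forall>t::nat. 0 < t \<longrightarrow>
        (let yb = vec l (\<lambda>i. \<Sum>k<t. ((trunc_mat M ^\<^sub>m k) *\<^sub>v trunc_vec x) $ i) in
          (\<forall>i<l. 0 < yb $ i) \<and>
          ((\<forall>i<l+1. 0 < (\<Sum>k<t. (M ^\<^sub>m k) $$ (i,l))) \<longrightarrow>
             (\<forall>i<l. (trunc_mat M *\<^sub>v yb) $ i < lam * yb $ i) \<and>
             nonsingular_M_matrix l Lb)))"
proof -
  interpret nonneg_mat_pos_eigenvector l M lam x using assms by unfold_locales
  have Lb_apply: "(Lb *\<^sub>v v) $ i = lam * v $ i - (M' *\<^sub>v v) $ i"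
    if "v \<in> carrier_vec l" "i < l" for v i
    unfolding Lb_def by (rule shifted_mult_mat_vec_index[OF M'_carrier that])
  have M_matrix: "nonsingular_M_matrix l Lb"
    if "v \<in> carrier_vec l" "\<forall>i<l. 0 < v $ i" "\<forall>i<l. (M' *\<^sub>v v) $ i < lam * v $ i" for v
    unfolding Lb_def by (rule nonsingular_M_matrix_shift_if_strictly_subinvariant[OF M'_carrier M'_nonneg that])
  have "nonsingular_M_matrix l Lb" if "\<forall>i<l+1. 0 < M $$ (i,l)"
    using M_matrix[OF x'_carrier x'_pos] x'_strictly_subinvariant that by simp
  moreover have "nonsingular_M_matrix l Lb"
    if "0 < t" "\<forall>i<l+1. 0 < (\<Sum>k<t. (M ^\<^sub>m k) $$ (i,l))" for t
    by (rule M_matrix[OF partial_sum_carrier])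
      (use partial_sum_pos[OF that(1)] partial_sum_strictly_subinvariant that(2) in auto)
  ultimately show ?thesis
    unfolding Let_def partial_sum_def[symmetric]
    using eigenvalue_nonneg x'_subinvariant x'_strictly_subinvariant partial_sum_pos
      partial_sum_strictly_subinvariant Lb_apply x'_carrier by auto
qed

end
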